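(* Consider a network $\dot{x}_i=f(x_i)+u_i$, $i=1,\dots,N$, $x_i\in\mathbb{R}^n$, with $u_i$ depending on $x_1,\dots,x_N$. Suppose there is a smooth $\Phi:(\mathbb{R}^n)^N\times(\mathbb{R}^n)^N\to\mathbb{R}^n$ such that for every $i=1,\dots,N$, $$\Phi(x_i,x_{i+1},\dots,x_{i+N-1},x_1,\dots,x_N)=f(x_i)+u_i,$$ with indices taken modulo $N$. Define $\Psi:\mathbb{R}^{nN}\times(\mathbb{R}^n)^N\to\mathbb{R}^{nN}$ by, for $Y=(y_1,\dots,y_N)\in(\mathbb{R}^n)^N$, letting the $k$-th $n$-block of $\Psi(Y,x_1,\dots,x_N)$ be $\Phi(y_k,y_{k+1},\dots,y_{k+N-1},x_1,\dots,x_N)$ (indices mod $N$). Let $(x_1(t),\dots,x_N(t))$ be a solution of the network and suppose there is $\lambda>0$ with $\big(\tfrac{\partial\Psi}{\partial Y}(Y,x_1(t),\dots,x_N(t))\big)_s\preceq-\lambda I$ for all $Y\in\mathbb{R}^{nN}$ and $t\ge0$. Then $\|x_i(t)-x_j(t)\|\to0$ exponentially as $t\to\infty$ for all $i,j$. In particular, if this holds for every solution, the network is completely synchronized regardless of initial conditions.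
   Context: For a square matrix $M$, $M_s=\tfrac12(M+M^T)$. $M\preceq N$ means $N-M$ is positive semidefinite. *)

theory Defs
  imports "HOL-Analysis.Analysis"
begin

text \<open>Iterated partial derivatives: pderivs f vs g means g is obtained from f by
  differentiating successively along the directions of vs (last element first).\<close>
fun pderivs :: "('a::euclidean_space \<Rightarrow> 'b::real_normed_vector) \<Rightarrow> 'a list \<Rightarrow> ('a \<Rightarrow> 'b) \<Rightarrow> bool" where
  "pderivs f [] g = (g = f)"
| "pderivs f (v # vs) h =
     (\<exists>g. pderivs f vs g \<and> (\<forall>x. ((\<lambda>t. g (x + t *\<^sub>R v)) has_vector_derivative h x) (at 0)))"

definition smooth :: "('a::euclidean_space \<Rightarrow> 'b::real_normed_vector) \<Rightarrow> bool" where
  "smooth f \<longleftrightarrow> (\<forall>vs. set vs \<subseteq> Basis \<longrightarrow> (\<exists>g. pderivs f vs g \<and> continuous_on UNIV g))"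

text \<open>Matrices indexed by the standard basis of a Euclidean space.\<close>
definition mat_of_lin :: "('a::euclidean_space \<Rightarrow> 'a) \<Rightarrow> 'a \<Rightarrow> 'a \<Rightarrow> real" where
  "mat_of_lin L = (\<lambda>a b. a \<bullet> L b)"

definition sym_part :: "('a \<Rightarrow> 'a \<Rightarrow> real) \<Rightarrow> 'a \<Rightarrow> 'a \<Rightarrow> real" where
  "sym_part M = (\<lambda>a b. (M a b + M b a) / 2)"

definition id_mat :: "'a \<Rightarrow> 'a \<Rightarrow> real" where
  "id_mat = (\<lambda>a b. if a = b then 1 else 0)"

definition psd_on :: "'a set \<Rightarrow> ('a \<Rightarrow> 'a \<Rightarrow> real) \<Rightarrow> bool" where
  "psd_on B M \<longleftrightarrow> (\<forall>c. 0 \<le> (\<Sum>a\<in>B. \<Sum>b\<in>B. c a * M a b * c b))"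

definition loewner_le :: "'a set \<Rightarrow> ('a \<Rightarrow> 'a \<Rightarrow> real) \<Rightarrow> ('a \<Rightarrow> 'a \<Rightarrow> real) \<Rightarrow> bool" where
  "loewner_le B M M' \<longleftrightarrow> psd_on B (\<lambda>a b. M' a b - M a b)"

text \<open>Cyclic labelling: \<iota> enumerates the agents as \<iota> 0, ..., \<iota> (N-1); pos is its inverse.\<close>
definition pos :: "(nat \<Rightarrow> 'N::finite) \<Rightarrow> 'N \<Rightarrow> nat" where
  "pos \<iota> k = inv_into {..<CARD('N)} \<iota> k"

text \<open>rot \<iota> k Y = (y_k, y_{k+1}, ..., y_{k+N-1}), indices mod N.\<close>
definition rot :: "(nat \<Rightarrow> 'N::finite) \<Rightarrow> 'N \<Rightarrow> 'v ^ 'N \<Rightarrow> 'v ^ 'N" where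
  "rot \<iota> k Y = (\<chi> j. Y $ \<iota> ((pos \<iota> k + pos \<iota> j) mod CARD('N)))"

definition Psi :: "(nat \<Rightarrow> 'N::finite) \<Rightarrow> ('v ^ 'N \<Rightarrow> 'v ^ 'N \<Rightarrow> 'v) \<Rightarrow> 'v ^ 'N \<Rightarrow> 'v ^ 'N \<Rightarrow> 'v ^ 'N" where
  "Psi \<iota> \<Phi> Y X = (\<chi> k. \<Phi> (rot \<iota> k Y) X)"

end

theory Submission
  imports Defs
begin

text \<open>Let \<open>S\<close> be the cyclic shift \<open>(S Y)\<^sub>k = y\<^sub>k\<^sub>+\<^sub>1\<close>. It commutes with \<open>\<Psi>(\<cdot>, X)\<close>, and
  \<open>\<Psi>(X, X)\<close> is the vector field of the network. Hence \<open>W = X - S X\<close> satisfies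
  \<open>W' = \<Psi>(X, X) - \<Psi>(S X, X)\<close>, and the mean value theorem applied to the contraction hypothesis
  gives \<open>\<langle>W, W'\<rangle> \<le> -\<lambda> |W|\<^sup>2\<close>, so \<open>|W|\<close> decays like \<open>e\<^sup>-\<^sup>\<lambda>\<^sup>t\<close>. The components of \<open>W\<close> are the
  differences of consecutive agents, and telescoping around the cycle bounds all other differences.
  Smoothness of \<open>\<Phi>\<close> enters only through continuity of its first partial derivatives, which makes
  \<open>\<Psi>(\<cdot>, X)\<close> differentiable so that the contraction hypothesis can be invoked.\<close>

lemma has_vector_derivative_along_line:
  fixes F :: "'a::real_normed_vector \<Rightarrow> 'b::real_normed_vector"
  assumes "\<And>z. ((\<lambda>t. F (z + t *\<^sub>R b)) has_vector_derivative P z) (at 0)"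
  shows "((\<lambda>t. F (z + t *\<^sub>R b)) has_vector_derivative P (z + s *\<^sub>R b)) (at s)"
proof -
  have shift: "((\<lambda>t. t - s) has_vector_derivative 1) (at s)"
    by (auto intro!: derivative_eq_intros)
  have "((\<lambda>t. F ((z + s *\<^sub>R b) + t *\<^sub>R b)) has_vector_derivative P (z + s *\<^sub>R b)) (at ((\<lambda>t. t - s) s))"
    using assms by simp
  moreover have "(\<lambda>t. F ((z + s *\<^sub>R b) + t *\<^sub>R b)) \<circ> (\<lambda>t. t - s) = (\<lambda>t. F (z + t *\<^sub>R b))"
    by (auto simp: algebra_simps)
  ultimately show ?thesis
    using vector_diff_chain_at[OF shift] by fastforce
qed

lemma norm_increment_along_line_le:
  fixes F :: "'a::real_normed_vector \<Rightarrow> 'b::real_normed_vector"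
  assumes der: "\<And>z. ((\<lambda>t. F (z + t *\<^sub>R b)) has_vector_derivative P z) (at 0)"
    and bound: "\<And>s. \<bar>s\<bar> \<le> \<bar>h\<bar> \<Longrightarrow> norm (P (z + s *\<^sub>R b) - c) \<le> e"
  shows "norm (F (z + h *\<^sub>R b) - F z - h *\<^sub>R c) \<le> e * \<bar>h\<bar>"
proof -
  let ?g = "\<lambda>t. F (z + t *\<^sub>R b) - t *\<^sub>R c"
  have g_deriv: "(?g has_derivative (\<lambda>u. u *\<^sub>R (P (z + s *\<^sub>R b) - c))) (at s within cball 0 \<bar>h\<bar>)" for s
  proof -
    have "((\<lambda>t. F (z + t *\<^sub>R b)) has_derivative (\<lambda>u. u *\<^sub>R P (z + s *\<^sub>R b))) (at s)"
      using has_vector_derivative_along_line[OF der] unfolding has_vector_derivative_def .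
    then have "(?g has_derivative (\<lambda>u. u *\<^sub>R P (z + s *\<^sub>R b) - u *\<^sub>R c)) (at s)"
      by (auto intro!: derivative_eq_intros)
    then show ?thesis
      by (auto intro: has_derivative_at_withinI simp: scaleR_diff_right)
  qed
  have "onorm (\<lambda>u. u *\<^sub>R (P (z + s *\<^sub>R b) - c)) \<le> e" if "s \<in> cball 0 \<bar>h\<bar>" for s
    using that bound[of s] by (simp add: onorm_scaleR_left bounded_linear_ident onorm_id dist_real_def)
  then have "norm (?g h - ?g 0) \<le> e * norm (h - 0)"
    by (intro differentiable_bound[OF convex_cball g_deriv]) auto
  then show ?thesis by (simp add: algebra_simps)
qed

lemma norm_coordinate_partial_sum_le:
  fixes v :: "'a::euclidean_space"
  assumes "S \<subseteq> Basis" "b \<in> Basis" "b \<notin> S" "\<bar>s\<bar> \<le> \<bar>v \<bullet> b\<bar>"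
  shows "norm ((\<Sum>c\<in>S. (v \<bullet> c) *\<^sub>R c) + s *\<^sub>R b) \<le> norm v"
proof (rule norm_le_componentwise)
  fix c :: 'a assume c: "c \<in> Basis"
  have "(\<Sum>d\<in>S. (v \<bullet> d) *\<^sub>R d) \<bullet> c = (\<Sum>d\<in>S. if d = c then v \<bullet> c else 0)"
    using assms(1) c by (auto simp: inner_sum_left inner_Basis intro!: sum.cong)
  also have "\<dots> = (if c \<in> S then v \<bullet> c else 0)"
    using finite_subset[OF assms(1)] by (simp add: sum.delta')
  finally show "\<bar>((\<Sum>c\<in>S. (v \<bullet> c) *\<^sub>R c) + s *\<^sub>R b) \<bullet> c\<bar> \<le> \<bar>v \<bullet> c\<bar>"
    using assms c by (auto simp: inner_add_left inner_Basis)
qed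

lemma norm_increment_along_coordinates_le:
  fixes F :: "'a::euclidean_space \<Rightarrow> 'b::real_normed_vector"
  assumes der: "\<And>b z. b \<in> Basis \<Longrightarrow> ((\<lambda>t. F (z + t *\<^sub>R b)) has_vector_derivative P b z) (at 0)"
    and close: "\<And>b z. b \<in> Basis \<Longrightarrow> norm (z - x) \<le> norm v \<Longrightarrow> norm (P b z - P b x) \<le> e"
    and S: "S \<subseteq> Basis"
  shows "norm (F (x + (\<Sum>c\<in>S. (v \<bullet> c) *\<^sub>R c)) - F x - (\<Sum>c\<in>S. (v \<bullet> c) *\<^sub>R P c x))
           \<le> e * (\<Sum>c\<in>S. \<bar>v \<bullet> c\<bar>)"
  using finite_subset[OF S finite_Basis] S
proof (induction S rule: finite_induct)
  case empty
  then show ?case by simp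
next
  case (insert b S)
  let ?z = "x + (\<Sum>c\<in>S. (v \<bullet> c) *\<^sub>R c)"
  let ?last = "F (?z + (v \<bullet> b) *\<^sub>R b) - F ?z - (v \<bullet> b) *\<^sub>R P b x"
  let ?rest = "F ?z - F x - (\<Sum>c\<in>S. (v \<bullet> c) *\<^sub>R P c x)"
  have b: "b \<in> Basis" and S: "S \<subseteq> Basis" using insert.prems by auto
  have last: "norm ?last \<le> e * \<bar>v \<bullet> b\<bar>"
  proof (rule norm_increment_along_line_le)
    show "((\<lambda>t. F (z + t *\<^sub>R b)) has_vector_derivative P b z) (at 0)" for z
      using der b .
    fix s :: real assume "\<bar>s\<bar> \<le> \<bar>v \<bullet> b\<bar>"
    then have "norm (?z + s *\<^sub>R b - x) \<le> norm v"
      using norm_coordinate_partial_sum_le[OF S b insert.hyps(2)] by (simp add: add.assoc)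
    then show "norm (P b (?z + s *\<^sub>R b) - P b x) \<le> e"
      using close b by blast
  qed
  have "F (x + (\<Sum>c\<in>insert b S. (v \<bullet> c) *\<^sub>R c)) - F x - (\<Sum>c\<in>insert b S. (v \<bullet> c) *\<^sub>R P c x)
      = ?last + ?rest"
    using insert.hyps by (simp add: algebra_simps)
  then have "norm (F (x + (\<Sum>c\<in>insert b S. (v \<bullet> c) *\<^sub>R c)) - F x - (\<Sum>c\<in>insert b S. (v \<bullet> c) *\<^sub>R P c x))
      \<le> norm ?last + norm ?rest"
    by (simp only: norm_triangle_ineq)
  also have "\<dots> \<le> e * \<bar>v \<bullet> b\<bar> + e * (\<Sum>c\<in>S. \<bar>v \<bullet> c\<bar>)"
    using last insert.IH[OF S] by (rule add_mono)
  also have "\<dots> = e * (\<Sum>c\<in>insert b S. \<bar>v \<bullet> c\<bar>)"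
    using insert.hyps by (simp add: distrib_left)
  finally show ?case .
qed

lemma has_derivative_continuous_partials:
  fixes F :: "'a::euclidean_space \<Rightarrow> 'b::real_normed_vector"
  assumes der: "\<And>b z. b \<in> Basis \<Longrightarrow> ((\<lambda>t. F (z + t *\<^sub>R b)) has_vector_derivative P b z) (at 0)"
    and cont: "\<And>b. b \<in> Basis \<Longrightarrow> continuous_on UNIV (P b)"
  shows "(F has_derivative (\<lambda>h. \<Sum>b\<in>Basis. (h \<bullet> b) *\<^sub>R P b x)) (at x)"
  unfolding has_derivative_at_alt
proof (intro conjI allI impI)
  show "bounded_linear (\<lambda>h. \<Sum>b\<in>Basis. (h \<bullet> b) *\<^sub>R P b x)"
    by (intro bounded_linear_sum bounded_linear_compose[OF bounded_linear_scaleR_left bounded_linear_inner_left])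
  fix e :: real assume "e > 0"
  define e' where "e' = e / DIM('a)"
  have "e' > 0" using \<open>e > 0\<close> by (simp add: e'_def)
  then have "\<forall>b\<in>Basis. \<exists>d>0. \<forall>z. dist z x < d \<longrightarrow> dist (P b z) (P b x) < e'"
    using cont unfolding continuous_on_iff by blast
  then obtain d where d: "\<And>b. b \<in> Basis \<Longrightarrow> d b > 0 \<and> (\<forall>z. dist z x < d b \<longrightarrow> dist (P b z) (P b x) < e')"
    by metis
  define \<delta> where "\<delta> = Min (d ` Basis)"
  show "\<exists>\<delta>>0. \<forall>y. norm (y - x) < \<delta> \<longrightarrow>
          norm (F y - F x - (\<Sum>b\<in>Basis. ((y - x) \<bullet> b) *\<^sub>R P b x)) \<le> e * norm (y - x)"
  proof (intro exI conjI allI impI)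
    show "\<delta> > 0" using d by (simp add: \<delta>_def)
    fix y assume y: "norm (y - x) < \<delta>"
    have "norm (P b z - P b x) \<le> e'" if "b \<in> Basis" "norm (z - x) \<le> norm (y - x)" for b z
    proof -
      have "norm (z - x) < d b"
        using that y Min_le[of "d ` Basis" "d b"] unfolding \<delta>_def by fastforce
      then show ?thesis
        using d[OF \<open>b \<in> Basis\<close>] by (auto simp: dist_norm intro: less_imp_le)
    qed
    from norm_increment_along_coordinates_le[where v = "y - x", OF der this order_refl]
    have "norm (F y - F x - (\<Sum>b\<in>Basis. ((y - x) \<bullet> b) *\<^sub>R P b x)) \<le> e' * (\<Sum>c\<in>Basis. \<bar>(y - x) \<bullet> c\<bar>)"
      by (simp add: euclidean_representation)
    also have "\<dots> \<le> e' * (\<Sum>c\<in>(Basis::'a set). norm (y - x))"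
      using \<open>e' > 0\<close> by (intro mult_left_mono sum_mono Basis_le_norm) auto
    also have "\<dots> = e * norm (y - x)"
      by (simp add: e'_def)
    finally show "norm (F y - F x - (\<Sum>b\<in>Basis. ((y - x) \<bullet> b) *\<^sub>R P b x)) \<le> e * norm (y - x)" .
  qed
qed

lemma smooth_imp_differentiable:
  fixes F :: "'a::euclidean_space \<Rightarrow> 'b::real_normed_vector"
  assumes "smooth F"
  shows "F differentiable (at z)"
proof -
  have "\<exists>g. (\<forall>x. ((\<lambda>t. F (x + t *\<^sub>R b)) has_vector_derivative g x) (at 0)) \<and> continuous_on UNIV g"
    if "b \<in> Basis" for b
    using assms that unfolding smooth_def by (fastforce dest: spec[of _ "[b]"])
  then obtain P where "\<And>b. b \<in> Basis \<Longrightarrow>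
      (\<forall>x. ((\<lambda>t. F (x + t *\<^sub>R b)) has_vector_derivative P b x) (at 0)) \<and> continuous_on UNIV (P b)"
    by metis
  then show ?thesis
    unfolding differentiable_def by (blast intro: has_derivative_continuous_partials)
qed

definition quad_form :: "'a set \<Rightarrow> ('a \<Rightarrow> 'a \<Rightarrow> real) \<Rightarrow> ('a \<Rightarrow> real) \<Rightarrow> real" where
  "quad_form B M c = (\<Sum>a\<in>B. \<Sum>b\<in>B. c a * M a b * c b)"

lemma loewner_le_imp_quad_form_le:
  assumes "loewner_le B M M'"
  shows "quad_form B M c \<le> quad_form B M' c"
proof -
  have "0 \<le> (\<Sum>a\<in>B. \<Sum>b\<in>B. c a * M' a b * c b - c a * M a b * c b)"
    using assms unfolding loewner_le_def psd_on_def by (simp add: algebra_simps)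
  then show ?thesis
    by (simp add: quad_form_def sum_subtractf)
qed

lemma quad_form_scaled: "quad_form B (\<lambda>a b. k * M a b) c = k * quad_form B M c"
  by (simp add: quad_form_def sum_distrib_left mult_ac)

lemma quad_form_sym_part: "quad_form B (sym_part M) c = quad_form B M c"
proof -
  have "(\<Sum>a\<in>B. \<Sum>b\<in>B. c a * M b a * c b) = quad_form B M c"
    unfolding quad_form_def by (subst sum.swap) (simp add: mult_ac)
  then show ?thesis
    by (simp add: quad_form_def sym_part_def add_divide_distrib distrib_left distrib_right
        sum.distrib sum_divide_distrib[symmetric])
qed

lemma quad_form_id_mat: "quad_form Basis id_mat (\<lambda>a. v \<bullet> a) = v \<bullet> v"
  by (simp add: quad_form_def id_mat_def euclidean_inner[of v v] if_distrib[of "\<lambda>x. _ * x * _"]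
      sum.delta cong: if_cong)

lemma quad_form_mat_of_lin:
  fixes D :: "'a::euclidean_space \<Rightarrow> 'a"
  assumes "linear D"
  shows "quad_form Basis (mat_of_lin D) (\<lambda>a. v \<bullet> a) = v \<bullet> D v"
proof -
  have "D v = D (\<Sum>b\<in>Basis. (v \<bullet> b) *\<^sub>R b)"
    by (simp add: euclidean_representation)
  also have "\<dots> = (\<Sum>b\<in>Basis. (v \<bullet> b) *\<^sub>R D b)"
    by (simp add: linear_sum[OF assms] linear_scale[OF assms])
  finally have "D v = (\<Sum>b\<in>Basis. (v \<bullet> b) *\<^sub>R D b)" .
  then have "quad_form Basis (mat_of_lin D) (\<lambda>a. v \<bullet> a) = (\<Sum>a\<in>Basis. (v \<bullet> a) * (a \<bullet> D v))"
    by (simp add: quad_form_def mat_of_lin_def inner_sum_right sum_distrib_left mult_ac)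
  also have "\<dots> = v \<bullet> D v"
    by (simp add: euclidean_inner[of v "D v"] inner_commute)
  finally show ?thesis .
qed

lemma inner_le_of_loewner_le_neg_id:
  fixes D :: "'a::euclidean_space \<Rightarrow> 'a"
  assumes "linear D"
    and "loewner_le Basis (sym_part (mat_of_lin D)) (\<lambda>a b. - lam * id_mat a b)"
  shows "v \<bullet> D v \<le> - lam * (v \<bullet> v)"
proof -
  have "quad_form Basis (\<lambda>a b. - lam * id_mat a b) (\<lambda>a. v \<bullet> a) = - lam * (v \<bullet> v)"
    by (simp only: quad_form_scaled quad_form_id_mat)
  then show ?thesis
    using loewner_le_imp_quad_form_le[OF assms(2), of "\<lambda>a. v \<bullet> a"]
    by (simp only: quad_form_sym_part quad_form_mat_of_lin[OF assms(1)])
qed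

lemma inner_diff_le_of_dissipative_derivative:
  fixes G :: "'a::real_inner \<Rightarrow> 'a"
  assumes der: "\<And>Y. (G has_derivative G' Y) (at Y)"
    and dissipative: "\<And>Y v. v \<bullet> G' Y v \<le> - lam * (v \<bullet> v)"
  shows "(Y1 - Y2) \<bullet> (G Y1 - G Y2) \<le> - lam * ((Y1 - Y2) \<bullet> (Y1 - Y2))"
proof -
  define v where "v = Y1 - Y2"
  define h where "h s = v \<bullet> G (Y2 + s *\<^sub>R v)" for s
  have "(h has_derivative (\<lambda>u. v \<bullet> G' (Y2 + s *\<^sub>R v) (u *\<^sub>R v))) (at s within {0..1})" for s
  proof -
    have "((\<lambda>s. Y2 + s *\<^sub>R v) has_derivative (\<lambda>u. u *\<^sub>R v)) (at s)"
      by (auto intro!: derivative_eq_intros)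
    from diff_chain_at[OF this der]
    have "((\<lambda>s. v \<bullet> G (Y2 + s *\<^sub>R v)) has_derivative (\<lambda>u. v \<bullet> G' (Y2 + s *\<^sub>R v) (u *\<^sub>R v))) (at s)"
      using bounded_linear.has_derivative[OF bounded_linear_inner_right] unfolding comp_def by blast
    then show ?thesis unfolding h_def by (rule has_derivative_at_withinI)
  qed
  then obtain \<xi> where "h 1 - h 0 = v \<bullet> G' (Y2 + \<xi> *\<^sub>R v) v"
    using mvt_very_simple[of 0 1 h] by force
  then have "v \<bullet> (G Y1 - G Y2) = v \<bullet> G' (Y2 + \<xi> *\<^sub>R v) v"
    by (simp add: h_def v_def inner_diff_right)
  then show ?thesis
    using dissipative[where Y = "Y2 + \<xi> *\<^sub>R v" and v = v] by (simp add: v_def)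
qed

lemma dissipative_imp_exp_decay:
  fixes w :: "real \<Rightarrow> 'a::real_inner"
  assumes der: "\<And>t. t \<ge> 0 \<Longrightarrow> (w has_vector_derivative w' t) (at t within {0..})"
    and dissipative: "\<And>t. t \<ge> 0 \<Longrightarrow> w t \<bullet> w' t \<le> - lam * (w t \<bullet> w t)"
    and "t \<ge> 0"
  shows "norm (w t) \<le> norm (w 0) * exp (- lam * t)"
proof -
  define E where "E s = exp (2 * lam * s) * (w s \<bullet> w s)" for s
  define E' where "E' s = 2 * exp (2 * lam * s) * (lam * (w s \<bullet> w s) + w s \<bullet> w' s)" for s
  have E_deriv: "(E has_derivative (\<lambda>u. u * E' s)) (at s within {0..t})" if "s \<in> {0..t}" for s
  proof -
    have ws: "(w has_derivative (\<lambda>u. u *\<^sub>R w' s)) (at s within {0..t})"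
      using der[of s] that has_derivative_subset[of w _ s "{0..}" "{0..t}"]
      unfolding has_vector_derivative_def by auto
    have exp: "((\<lambda>s. exp (2 * lam * s)) has_derivative (\<lambda>u. u * (2 * lam * exp (2 * lam * s))))
        (at s within {0..t})"
      by (auto intro!: derivative_eq_intros)
    from has_derivative_mult[OF exp has_derivative_inner[OF ws ws]]
    show ?thesis
      unfolding E_def by (rule has_derivative_eq_rhs) (auto simp: E'_def algebra_simps inner_commute)
  qed
  obtain \<xi> where \<xi>: "\<xi> \<in> {0..t}" "E t - E 0 = (t - 0) * E' \<xi>"
    using mvt_very_simple[of 0 t E, OF \<open>t \<ge> 0\<close> E_deriv] by auto
  have "E' \<xi> \<le> 0"
    using dissipative[of \<xi>] \<xi>(1) unfolding E'_def by (simp add: mult_nonneg_nonpos)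
  with \<open>t \<ge> 0\<close> have "t * E' \<xi> \<le> 0"
    by (rule mult_nonneg_nonpos)
  with \<xi>(2) have "E t \<le> E 0"
    by simp
  then have "exp (2 * lam * t) * (norm (w t))\<^sup>2 \<le> (norm (w 0))\<^sup>2"
    by (simp add: E_def power2_norm_eq_inner)
  then have "(norm (w t))\<^sup>2 \<le> (norm (w 0))\<^sup>2 * exp (- (2 * lam * t))"
    by (simp add: exp_minus field_simps)
  also have "\<dots> = (norm (w 0) * exp (- lam * t))\<^sup>2"
    by (simp add: power_mult_distrib power2_eq_square exp_add[symmetric])
  finally show ?thesis
    by (rule power2_le_imp_le) simp
qed

definition cyc_next :: "(nat \<Rightarrow> 'N::finite) \<Rightarrow> 'N \<Rightarrow> 'N" where
  "cyc_next \<iota> j = \<iota> ((pos \<iota> j + 1) mod CARD('N))"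

definition cyc_shift :: "(nat \<Rightarrow> 'N::finite) \<Rightarrow> 'v ^ 'N \<Rightarrow> 'v ^ 'N" where
  "cyc_shift \<iota> Y = (\<chi> j. Y $ cyc_next \<iota> j)"

lemma pos_iota:
  assumes "bij_betw \<iota> {..<CARD('N)} (UNIV :: 'N::finite set)" "m < CARD('N)"
  shows "pos \<iota> (\<iota> m) = m"
  unfolding pos_def using bij_betw_inv_into_left[OF assms(1)] assms(2) by simp

lemma iota_pos:
  assumes "bij_betw \<iota> {..<CARD('N)} (UNIV :: 'N::finite set)"
  shows "\<iota> (pos \<iota> k) = k"
  unfolding pos_def using bij_betw_inv_into_right[OF assms] by simp

lemma pos_less_card:
  assumes "bij_betw \<iota> {..<CARD('N)} (UNIV :: 'N::finite set)"
  shows "pos \<iota> k < CARD('N)"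
  unfolding pos_def using bij_betwE[OF bij_betw_inv_into[OF assms]] by auto

lemma rot_cyc_shift:
  assumes enum: "bij_betw \<iota> {..<CARD('N)} (UNIV :: 'N::finite set)"
  shows "rot \<iota> k (cyc_shift \<iota> Y) = rot \<iota> (cyc_next \<iota> k) Y"
proof -
  have "\<iota> ((pos \<iota> (\<iota> ((pos \<iota> k + pos \<iota> j) mod CARD('N))) + 1) mod CARD('N))
      = \<iota> ((pos \<iota> (\<iota> ((pos \<iota> k + 1) mod CARD('N))) + pos \<iota> j) mod CARD('N))" for j
    by (simp add: pos_iota[OF enum] card_gt_0_iff mod_add_left_eq mod_add_right_eq mod_Suc_eq add_ac)
  then show ?thesis
    unfolding rot_def cyc_shift_def cyc_next_def by (simp add: vec_eq_iff)
qed

lemma Psi_cyc_shift: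
  assumes "bij_betw \<iota> {..<CARD('N)} (UNIV :: 'N::finite set)"
  shows "Psi \<iota> \<Phi> (cyc_shift \<iota> Y) X = cyc_shift \<iota> (Psi \<iota> \<Phi> Y X)"
  unfolding Psi_def by (simp add: rot_cyc_shift[OF assms]) (simp add: cyc_shift_def)

lemma bounded_linear_rot: "bounded_linear (rot \<iota> k :: 'v::euclidean_space ^ 'N::finite \<Rightarrow> _)"
  by (rule linear_conv_bounded_linear[THEN iffD1], rule linearI) (simp_all add: rot_def vec_eq_iff)

lemma bounded_linear_cyc_shift: "bounded_linear (cyc_shift \<iota> :: 'v::euclidean_space ^ 'N::finite \<Rightarrow> _)"
  by (rule linear_conv_bounded_linear[THEN iffD1], rule linearI) (simp_all add: cyc_shift_def vec_eq_iff)

lemma Psi_differentiable: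
  fixes \<Phi> :: "'v::euclidean_space ^ 'N::finite \<Rightarrow> 'v ^ 'N \<Rightarrow> 'v"
  assumes "smooth (\<lambda>(Y, X). \<Phi> Y X)"
  shows "(\<lambda>Z. Psi \<iota> \<Phi> Z X) differentiable (at Y)"
proof -
  have "(\<lambda>Z. \<Phi> (rot \<iota> k Z) X) differentiable (at Y)" for k
  proof -
    have "((\<lambda>Z. (rot \<iota> k Z, X)) has_derivative (\<lambda>h. (rot \<iota> k h, 0))) (at Y)"
      by (intro has_derivative_Pair bounded_linear_imp_has_derivative bounded_linear_rot has_derivative_const)
    then have "(\<lambda>Z. (rot \<iota> k Z, X)) differentiable (at Y)"
      unfolding differentiable_def by blast
    from differentiable_chain_at[OF this smooth_imp_differentiable[OF assms]]
    show ?thesis by (simp add: comp_def)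
  qed
  then obtain D where D: "\<And>k. ((\<lambda>Z. \<Phi> (rot \<iota> k Z) X) has_derivative D k) (at Y)"
    unfolding differentiable_def by metis
  have "((\<lambda>Z. Psi \<iota> \<Phi> Z X) has_derivative (\<lambda>h. \<chi> k. D k h)) (at Y)"
  proof (rule has_derivative_componentwise_within[THEN iffD2], intro ballI)
    fix i :: "'v ^ 'N" assume "i \<in> Basis"
    then obtain k b where i: "i = axis k b" "b \<in> Basis" unfolding Basis_vec_def by auto
    have "((\<lambda>Z. \<Phi> (rot \<iota> k Z) X \<bullet> b) has_derivative (\<lambda>h. D k h \<bullet> b)) (at Y)"
      by (rule bounded_linear.has_derivative[OF bounded_linear_inner_left D])
    then show "((\<lambda>Z. Psi \<iota> \<Phi> Z X \<bullet> i) has_derivative (\<lambda>h. (\<chi> k. D k h) \<bullet> i)) (at Y)"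
      by (simp add: i inner_axis Psi_def)
  qed
  then show ?thesis unfolding differentiable_def by blast
qed

lemma norm_nth_diff_le_card_mult_norm_cyc_shift:
  fixes X :: "'v::real_normed_vector ^ 'N::finite"
  assumes enum: "bij_betw \<iota> {..<CARD('N)} (UNIV :: 'N set)"
  shows "norm (X $ i - X $ j) \<le> real CARD('N) * norm (X - cyc_shift \<iota> X)"
proof -
  let ?N = "CARD('N)"
  have step: "norm (X $ k - X $ cyc_next \<iota> k) \<le> norm (X - cyc_shift \<iota> X)" for k
    using Finite_Cartesian_Product.norm_nth_le[of "X - cyc_shift \<iota> X" k] by (simp add: cyc_shift_def)
  have walk: "norm (X $ i - X $ \<iota> ((pos \<iota> i + m) mod ?N)) \<le> real m * norm (X - cyc_shift \<iota> X)" for m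
  proof (induction m)
    case 0
    then show ?case using iota_pos[OF enum, of i] pos_less_card[OF enum, of i] by simp
  next
    case (Suc m)
    let ?k = "\<iota> ((pos \<iota> i + m) mod ?N)"
    have "\<iota> ((pos \<iota> i + Suc m) mod ?N) = cyc_next \<iota> ?k"
      unfolding cyc_next_def by (simp add: pos_iota[OF enum] card_gt_0_iff mod_Suc_eq)
    then show ?case
      using norm_diff_triangle_le[OF Suc.IH step[of ?k]] by (simp add: algebra_simps)
  qed
  define m where "m = (pos \<iota> j + ?N - pos \<iota> i) mod ?N"
  have "(pos \<iota> i + m) mod ?N = pos \<iota> j"
    using pos_less_card[OF enum, of i] pos_less_card[OF enum, of j]
    by (simp add: m_def mod_add_right_eq)
  then have "norm (X $ i - X $ j) \<le> real m * norm (X - cyc_shift \<iota> X)"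
    using walk[of m] iota_pos[OF enum, of j] by simp
  also have "\<dots> \<le> real ?N * norm (X - cyc_shift \<iota> X)"
    by (intro mult_right_mono) (auto simp: m_def card_gt_0_iff less_imp_le)
  finally show ?thesis .
qed

theorem theorem3p5:
  fixes \<iota> :: "nat \<Rightarrow> 'N::finite"
    and f :: "real ^ 'n \<Rightarrow> real ^ 'n"
    and u :: "real ^ 'n ^ 'N \<Rightarrow> real ^ 'n ^ 'N"
    and \<Phi> :: "real ^ 'n ^ 'N \<Rightarrow> real ^ 'n ^ 'N \<Rightarrow> real ^ 'n"
    and x :: "real \<Rightarrow> real ^ 'n ^ 'N"
    and lam :: real
  assumes enum: "bij_betw \<iota> {..<CARD('N)} UNIV"
    and smooth_Phi: "smooth (\<lambda>(Y, X). \<Phi> Y X)"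
    and Phi_eq: "\<And>X i. \<Phi> (rot \<iota> i X) X = f (X $ i) + u X $ i"
    and sol: "\<And>t. t \<ge> 0 \<Longrightarrow>
               (x has_vector_derivative (\<chi> i. f (x t $ i) + u (x t) $ i)) (at t within {0..})"
    and lam: "lam > 0"
    and contr: "\<And>t Y D. t \<ge> 0 \<Longrightarrow> ((\<lambda>Z. Psi \<iota> \<Phi> Z (x t)) has_derivative D) (at Y) \<Longrightarrow>
               loewner_le Basis (sym_part (mat_of_lin D)) (\<lambda>a b. - lam * id_mat a b)"
  shows "\<forall>i j. \<exists>C k. k > 0 \<and> (\<forall>t\<ge>0. norm (x t $ i - x t $ j) \<le> C * exp (- k * t))"
proof -
  define w where "w t = x t - cyc_shift \<iota> (x t)" for t
  define w' where "w' t = Psi \<iota> \<Phi> (x t) (x t) - Psi \<iota> \<Phi> (cyc_shift \<iota> (x t)) (x t)" for t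
  have "(w has_vector_derivative w' t) (at t within {0..})" if "t \<ge> 0" for t
  proof -
    have "(\<chi> i. f (x t $ i) + u (x t) $ i) = Psi \<iota> \<Phi> (x t) (x t)"
      by (simp add: Psi_def Phi_eq)
    with sol[OF that] have "(x has_vector_derivative Psi \<iota> \<Phi> (x t) (x t)) (at t within {0..})"
      by simp
    from bounded_linear.has_vector_derivative[OF
        bounded_linear_sub[OF bounded_linear_ident bounded_linear_cyc_shift] this]
    show ?thesis
      unfolding w_def w'_def by (simp add: Psi_cyc_shift[OF enum])
  qed
  moreover have "w t \<bullet> w' t \<le> - lam * (w t \<bullet> w t)" if "t \<ge> 0" for t
  proof -
    obtain D where D: "\<And>Y. ((\<lambda>Z. Psi \<iota> \<Phi> Z (x t)) has_derivative D Y) (at Y)"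
      using Psi_differentiable[OF smooth_Phi] unfolding differentiable_def by metis
    have "v \<bullet> D Y v \<le> - lam * (v \<bullet> v)" for Y v
      using inner_le_of_loewner_le_neg_id[OF has_derivative_linear[OF D] contr[OF that D]] .
    from inner_diff_le_of_dissipative_derivative[OF D this]
    show ?thesis unfolding w_def w'_def .
  qed
  ultimately have decay: "norm (w t) \<le> norm (w 0) * exp (- lam * t)" if "t \<ge> 0" for t
    using dissipative_imp_exp_decay that by blast
  have "norm (x t $ i - x t $ j) \<le> (CARD('N) * norm (w 0)) * exp (- lam * t)" if "t \<ge> 0" for t i j
  proof -
    have "norm (x t $ i - x t $ j) \<le> CARD('N) * norm (w t)"
      unfolding w_def by (rule norm_nth_diff_le_card_mult_norm_cyc_shift[OF enum])
    also have "\<dots> \<le> CARD('N) * (norm (w 0) * exp (- lam * t))"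
      using decay[OF that] by (rule mult_left_mono) simp
    finally show ?thesis by (simp add: mult.assoc)
  qed
  then show ?thesis
    using lam by blast
qed

end
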